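(* For every $n\ge 4$, $|\mathrm{Sort}_n(123,321)|=7\cdot 2^{n-4}$.
   Context: A permutation $x$ contains a pattern $p$ if it has a subsequence order-isomorphic to $p$; otherwise it avoids $p$. For a set $T$ of patterns, the map $s_T$ is defined as follows: the entries of the input permutation $x=x_1\cdots x_n$ are read from left to right, with an initially empty stack. At each step, if the input is nonempty and pushing the next input entry onto the stack produces a stack whose contents, read from top to bottom, avoid every pattern in $T$, that entry is pushed; otherwise the top entry of the stack is popped and appended to the output. When the input is exhausted, the remaining stack entries are popped one at a time to the output. $s_T(x)$ is the output word. Write $s_{\sigma,\tau}=s_{\{\sigma,\tau\}}$ and $s=s_{\{21\}}$ (West's stack-sorting map, whose stack is increasing from top to bottom). $\mathrm{Sort}_n(\sigma,\tau)$ is the set of $x\in S_n$ such that $s(s_{\sigma,\tau}(x))=12\cdots n$. *)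

theory Defs
  imports Main
begin

definition perms :: "nat \<Rightarrow> nat list set" where
  "perms n = {xs. distinct xs \<and> set xs = {1..n}}"

definition order_iso :: "nat list \<Rightarrow> nat list \<Rightarrow> bool" where
  "order_iso ys p \<longleftrightarrow> length ys = length p \<and>
     (\<forall>i<length p. \<forall>j<length p. (ys ! i < ys ! j \<longleftrightarrow> p ! i < p ! j))"

definition contains :: "nat list \<Rightarrow> nat list \<Rightarrow> bool" where
  "contains xs p \<longleftrightarrow> (\<exists>I. order_iso (nths xs I) p)"

definition avoids_all :: "nat list set \<Rightarrow> nat list \<Rightarrow> bool" where
  "avoids_all T w \<longleftrightarrow> (\<forall>p\<in>T. \<not> contains w p)"

(* Arguments: input, stack (top first), output.
   If the stack is empty, pushing is always performed (this case never arises
   for patterns of length >= 2, since a one-entry stack avoids them). *)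
fun stack_run :: "nat list set \<Rightarrow> nat list \<Rightarrow> nat list \<Rightarrow> nat list \<Rightarrow> nat list" where
  "stack_run T [] [] out = out"
| "stack_run T [] (s # st) out = stack_run T [] st (out @ [s])"
| "stack_run T (a # inp) [] out = stack_run T inp [a] out"
| "stack_run T (a # inp) (s # st) out =
     (if avoids_all T (a # s # st) then stack_run T inp (a # s # st) out
      else stack_run T (a # inp) st (out @ [s]))"

definition sT :: "nat list set \<Rightarrow> nat list \<Rightarrow> nat list" where
  "sT T x = stack_run T x [] []"

definition west_s :: "nat list \<Rightarrow> nat list" where
  "west_s x = sT {[2,1]} x"

definition Sort :: "nat \<Rightarrow> nat list \<Rightarrow> nat list \<Rightarrow> nat list set" where
  "Sort n \<sigma> \<tau> = {x \<in> perms n. west_s (sT {\<sigma>, \<tau>} x) = [1..<n+1]}"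

end

theory Submission
  imports Defs "HOL-Library.Sublist" "HOL-Library.Multiset"
begin

text \<open>
  West's map \<open>s\<close> sorts a word only if the word avoids 231, so \<open>x\<close> lies in
  \<open>Sort\<^sub>n(123,321)\<close> only if the output of the \<open>{123,321}\<close>-machine on \<open>x\<close> avoids 231.
  The first entry of \<open>x\<close> stays at the bottom of that machine's stack. Above a suitable
  bottom the stack has room for just two smaller entries, the upper one larger; on such a base
  the output avoids 231 exactly when the input arises by repeatedly putting the current maximum
  in first or second position, and then the output lists the input in decreasing order.
  There are \<open>2^(k-1)\<close> such permutations of \<open>[k]\<close>. Following where \<open>n\<close> sits in \<open>x\<close>, the
  231 condition forces \<open>x\<close> to be \<open>n z\<close>, \<open>(n-1) n z\<close> or \<open>(n-1) (n-2) n z\<close> with \<open>z\<close> of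
  that kind, and \<open>s\<close> sorts the outputs of all of these. So the count is
  \<open>2^(n-2) + 2^(n-3) + 2^(n-4) = 7 * 2^(n-4)\<close>.
\<close>

section \<open>Patterns as subsequences\<close>

lemma contains_iff_subseq: "contains w p \<longleftrightarrow> (\<exists>s. subseq s w \<and> order_iso s p)"
  unfolding contains_def subseq_conv_nths by blast

lemma order_iso_123: "order_iso s [1,2,3] \<longleftrightarrow> (\<exists>a b c. s = [a,b,c] \<and> a < b \<and> b < c)"
  by (auto simp: order_iso_def numeral_3_eq_3 length_Suc_conv less_Suc_eq nth_Cons')

lemma order_iso_321: "order_iso s [3,2,1] \<longleftrightarrow> (\<exists>a b c. s = [a,b,c] \<and> b < a \<and> c < b)"
  by (auto simp: order_iso_def numeral_3_eq_3 length_Suc_conv less_Suc_eq nth_Cons')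

lemma order_iso_21: "order_iso s [2,1] \<longleftrightarrow> (\<exists>a b. s = [a,b] \<and> b < a)"
  by (auto simp: order_iso_def numeral_2_eq_2 length_Suc_conv less_Suc_eq nth_Cons')

lemma order_iso_231: "order_iso s [2,3,1] \<longleftrightarrow> (\<exists>a b c. s = [a,b,c] \<and> c < a \<and> a < b)"
  by (auto simp: order_iso_def numeral_3_eq_3 length_Suc_conv less_Suc_eq nth_Cons')

lemma subseq_pair_Cons:
  "subseq [b,c] (y # ys) \<longleftrightarrow> (b = y \<and> c \<in> set ys) \<or> subseq [b,c] ys"
  by (auto simp: subseq_singleton_left dest: subseq_Cons')

lemma subseq_triple_Cons:
  "subseq [a,b,c] (y # ys) \<longleftrightarrow> (a = y \<and> subseq [b,c] ys) \<or> subseq [a,b,c] ys"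
  by (cases "a = y") (auto dest: subseq_Cons')

lemma subseq_Cons_appendI: "x \<in> set xs \<Longrightarrow> subseq zs ys \<Longrightarrow> subseq (x # zs) (xs @ ys)"
proof -
  assume "x \<in> set xs" "subseq zs ys"
  moreover obtain xs1 xs2 where "xs = xs1 @ x # xs2"
    using \<open>x \<in> set xs\<close> by (meson in_set_conv_decomp)
  ultimately show ?thesis
    by (simp add: list_emb_append2)
qed

lemma subseq_pairI: "x \<in> set xs \<Longrightarrow> y \<in> set ys \<Longrightarrow> subseq [x,y] (xs @ ys)"
  by (simp add: subseq_Cons_appendI subseq_singleton_left)

lemma subseq_pair_snoc:
  assumes "subseq [u, n] (ys @ [b])" "b \<noteq> n"
  shows "subseq [u, n, b] (ys @ [b])"
proof -
  from assms(1) obtain xs1 xs2 where split: "[u, n] = xs1 @ xs2" "subseq xs1 ys" "subseq xs2 [b]"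
    by (auto elim: subseq_appendE)
  have "xs2 = [] \<or> xs2 = [b]"
    using split(3) by (cases xs2) (auto split: if_splits)
  with split(1) assms(2) have "xs2 = []"
    by (metis last_snoc list.distinct(1) last.simps)
  then have "subseq ([u, n] @ [b]) (ys @ [b])"
    using split by (intro list_emb_append_mono) auto
  then show ?thesis by simp
qed

text \<open>Executable tests for monotone patterns of length 3, so that \<open>simp\<close> decides
  avoidance for explicit stack contents.\<close>
fun chain2_from :: "('a \<Rightarrow> 'a \<Rightarrow> bool) \<Rightarrow> 'a \<Rightarrow> 'a list \<Rightarrow> bool" where
  "chain2_from R x [] = False"
| "chain2_from R x (y # ys) = ((R x y \<and> (\<exists>c\<in>set ys. R y c)) \<or> chain2_from R x ys)"

fun has_chain3 :: "('a \<Rightarrow> 'a \<Rightarrow> bool) \<Rightarrow> 'a list \<Rightarrow> bool" where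
  "has_chain3 R [] = False"
| "has_chain3 R (x # xs) = (chain2_from R x xs \<or> has_chain3 R xs)"

lemma chain2_from_iff: "chain2_from R x ys \<longleftrightarrow> (\<exists>b c. subseq [b,c] ys \<and> R x b \<and> R b c)"
proof (induction ys)
  case (Cons y ys)
  have "(\<exists>b c. subseq [b,c] (y # ys) \<and> R x b \<and> R b c) \<longleftrightarrow>
      (R x y \<and> (\<exists>c\<in>set ys. R y c)) \<or> (\<exists>b c. subseq [b,c] ys \<and> R x b \<and> R b c)"
    unfolding subseq_pair_Cons by blast
  with Cons.IH show ?case by simp
qed simp

lemma has_chain3_iff: "has_chain3 R w \<longleftrightarrow> (\<exists>a b c. subseq [a,b,c] w \<and> R a b \<and> R b c)"
proof (induction w)
  case (Cons x xs)
  have "(\<exists>a b c. subseq [a,b,c] (x # xs) \<and> R a b \<and> R b c) \<longleftrightarrow>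
      (\<exists>b c. subseq [b,c] xs \<and> R x b \<and> R b c) \<or> (\<exists>a b c. subseq [a,b,c] xs \<and> R a b \<and> R b c)"
    unfolding subseq_triple_Cons by blast
  with Cons.IH show ?case by (simp add: chain2_from_iff)
qed simp

text \<open>Both simp rules below are stated with \<open>Suc 0\<close>, the simp normal form of \<open>1\<close>, so that
  they match the pattern sets as \<open>simp\<close> sees them.\<close>
lemma avoids_123_321 [simp]:
  "avoids_all {[Suc 0,2,3],[3,2,Suc 0]} w \<longleftrightarrow> \<not> has_chain3 (<) w \<and> \<not> has_chain3 (>) w"
proof -
  have "contains w [1,2,3] \<longleftrightarrow> has_chain3 (<) w"
    unfolding contains_iff_subseq order_iso_123 has_chain3_iff by blast
  moreover have "contains w [3,2,1] \<longleftrightarrow> has_chain3 (>) w"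
    unfolding contains_iff_subseq order_iso_321 has_chain3_iff by blast
  ultimately have "avoids_all {[1,2,3],[3,2,1]} w \<longleftrightarrow> \<not> has_chain3 (<) w \<and> \<not> has_chain3 (>) w"
    unfolding avoids_all_def by (simp del: One_nat_def)
  then show ?thesis by simp
qed

lemma avoids_21_iff_sorted [simp]: "avoids_all {[2,Suc 0]} w \<longleftrightarrow> sorted w"
proof -
  have "contains w [2,1] \<longleftrightarrow> (\<exists>a b. subseq [a,b] w \<and> b < a)"
    unfolding contains_iff_subseq order_iso_21 by blast
  then have "avoids_all {[2,1]} w \<longleftrightarrow> \<not> (\<exists>a b. subseq [a,b] w \<and> b < a)"
    unfolding avoids_all_def by (simp del: One_nat_def)
  also have "\<dots> \<longleftrightarrow> sorted w"
  proof (induction w)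
    case (Cons a w)
    have "(\<exists>b c. subseq [b,c] (a # w) \<and> c < b) \<longleftrightarrow>
        (\<exists>c\<in>set w. c < a) \<or> (\<exists>b c. subseq [b,c] w \<and> c < b)"
      unfolding subseq_pair_Cons by blast
    with Cons.IH show ?case by (auto simp: not_less)
  qed simp
  finally show ?thesis by simp
qed

section \<open>Runs of the stack machine\<close>

lemma stack_run_append_out: "stack_run T inp st (xs @ ys) = xs @ stack_run T inp st ys"
  by (induction T inp st ys arbitrary: xs rule: stack_run.induct) simp_all

lemma stack_run_out: "stack_run T inp st out = out @ stack_run T inp st []"
  using stack_run_append_out[of T inp st out "[]"] by simp

lemma stack_run_Nil: "stack_run T [] st out = out @ st"
  by (induction st arbitrary: out) simp_all

lemma mset_stack_run: "mset (stack_run T inp st out) = mset out + mset st + mset inp"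
  by (induction T inp st out rule: stack_run.induct) (auto simp: ac_simps)

lemma set_stack_run: "set (stack_run T inp st out) = set out \<union> set st \<union> set inp"
  by (metis mset_stack_run set_mset_mset set_mset_union)

lemma subseq_stack_run:
  fixes out :: "nat list"
  shows "subseq st (stack_run T inp st [])"
proof (induction T inp st out rule: stack_run.induct)
  case (4 T a inp s st)
  then show ?case
    by (cases "avoids_all T (a # s # st)")
      (simp_all add: subseq_Cons' stack_run_out[of T "a # inp" st "[s]"])
qed (simp_all add: stack_run_Nil)

lemma stack_run_keeps_bottom:
  assumes "\<forall>a\<in>set inp. avoids_all T (a # B)"
  shows "\<exists>ys. stack_run T inp (S @ B) out = ys @ B"
  using assms
proof (induction T inp "S @ B" out arbitrary: S rule: stack_run.induct)
  case (2 T s st out)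
  then show ?case
    by (cases S) (auto simp: stack_run_Nil)
next
  case (4 T a inp s st out)
  show ?case
  proof (cases "avoids_all T (a # s # st)")
    case True
    then have "stack_run T (a # inp) (s # st) out = stack_run T inp (a # s # st) out"
      by simp
    with True 4(1)[of "a # S"] 4(3-) show ?thesis by auto
  next
    case False
    with 4 show ?thesis
      by (cases S) auto
  qed
qed auto

section \<open>West's map sorts only 231-avoiding words\<close>

definition avoids_231 :: "nat list \<Rightarrow> bool" where
  "avoids_231 F \<longleftrightarrow> \<not> contains F [2,3,1]"

lemma avoids_231_iff: "avoids_231 F \<longleftrightarrow> \<not> (\<exists>a b c. subseq [a,b,c] F \<and> c < a \<and> a < b)"
  unfolding avoids_231_def contains_iff_subseq order_iso_231 by blast

lemma avoids_231D: "avoids_231 F \<Longrightarrow> subseq [a,b,c] F \<Longrightarrow> c < a \<Longrightarrow> a < b \<Longrightarrow> False"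
  unfolding avoids_231_iff by blast

text \<open>\<open>s\<close> is the 2 of a 231 pattern whose 3 and 1 lie in \<open>xs\<close>.\<close>
definition descent_around :: "nat \<Rightarrow> nat list \<Rightarrow> bool" where
  "descent_around s xs \<longleftrightarrow> (\<exists>c a. subseq [c,a] xs \<and> a < s \<and> s < c)"

lemma avoids_231_Cons:
  "avoids_231 (x # xs) \<longleftrightarrow> \<not> descent_around x xs \<and> avoids_231 xs"
  unfolding avoids_231_iff descent_around_def subseq_triple_Cons by blast

lemma descent_around_Cons:
  "descent_around s (x # xs) \<longleftrightarrow> (s < x \<and> (\<exists>a\<in>set xs. a < s)) \<or> descent_around s xs"
  unfolding descent_around_def subseq_pair_Cons by blast

lemma descent_around_imp_smaller: "descent_around s xs \<Longrightarrow> \<exists>a\<in>set xs. a < s"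
  unfolding descent_around_def by (meson subseq_Cons' subseq_singleton_left)

lemma west_run_sorted_imp:
  assumes "stack_run T inp st out = F" "T = {[2,1]}" "sorted_wrt (<) F"
  shows "avoids_231 inp \<and> (\<forall>s\<in>set st. \<not> descent_around s inp)"
  using assms
proof (induction T inp st out rule: stack_run.induct)
  case (3 T a inp out)
  then show ?case by (auto simp: avoids_231_Cons)
next
  case (4 T a inp s st out)
  show ?case
  proof (cases "avoids_all T (a # s # st)")
    case True
    then have "sorted (a # s # st)"
      using 4(4) avoids_21_iff_sorted by simp
    with True 4(1,3-) show ?thesis
      by (force simp: avoids_231_Cons descent_around_Cons)
  next
    case False
    then have F: "stack_run T (a # inp) st (out @ [s]) = F"
      using 4(3) by simp
    then have "sorted_wrt (<) (out @ s # stack_run T (a # inp) st [])"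
      using 4(5) stack_run_out[of T "a # inp" st "out @ [s]"] by simp
    then have "\<forall>y\<in>set (a # inp). s < y"
      by (simp add: sorted_wrt_append set_stack_run)
    then have "\<not> descent_around s (a # inp)"
      using descent_around_imp_smaller by fastforce
    with 4(2)[OF False F 4(4,5)] show ?thesis by simp
  qed
qed (auto simp: avoids_231_iff descent_around_def)

lemma west_s_sorted_imp_avoids_231:
  assumes "sorted_wrt (<) (west_s y)"
  shows "avoids_231 y"
  using west_run_sorted_imp[OF _ refl assms] unfolding west_s_def sT_def by blast

lemma west_run_push:
  assumes "sorted (rev ds @ st)"
  shows "stack_run {[2,1]} (ds @ r) st out = stack_run {[2,1]} r (rev ds @ st) out"
  using assms
proof (induction ds arbitrary: st)
  case (Cons d ds)
  then have "stack_run {[2,1]} ((d # ds) @ r) st out = stack_run {[2,1]} (ds @ r) (d # st) out"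
    by (cases st) (simp_all add: sorted_append)
  with Cons show ?case by simp
qed simp

lemma west_run_pop:
  assumes "\<forall>s\<in>set st1. s < c" "st2 = [] \<or> c < hd st2" "sorted st2"
  shows "stack_run {[2,1]} (c # r) (st1 @ st2) out = stack_run {[2,1]} r (c # st2) (out @ st1)"
  using assms
proof (induction st1 arbitrary: out)
  case Nil
  then show ?case
    by (cases st2) (auto intro: order.trans)
next
  case (Cons s st1)
  then have "stack_run {[2,1]} (c # r) ((s # st1) @ st2) out
      = stack_run {[2,1]} (c # r) (st1 @ st2) (out @ [s])"
    by simp
  with Cons show ?case by simp
qed

lemma west_s_sorts_1: "n \<ge> 1 \<Longrightarrow> west_s (rev [1..<n] @ [n]) = [1..<n+1]"
proof -
  assume n: "n \<ge> 1"
  have "west_s (rev [1..<n] @ [n]) = stack_run {[2,1]} [n] [1..<n] []"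
    unfolding west_s_def sT_def using west_run_push[of "rev [1..<n]" "[]" "[n]" "[]"] by simp
  also have "\<dots> = [1..<n+1]"
    using west_run_pop[of "[1..<n]" n "[]" "[]" "[]"] n by (simp add: stack_run_Nil)
  finally show ?thesis .
qed

lemma west_s_sorts_2: "n \<ge> 2 \<Longrightarrow> west_s (rev [1..<n-1] @ [n, n-1]) = [1..<n+1]"
proof -
  assume n: "n \<ge> 2"
  then obtain k where k: "n = Suc (Suc k)" by (metis add_2_eq_Suc le_Suc_ex)
  have "west_s (rev [1..<n-1] @ [n, n-1]) = stack_run {[2,1]} [n, n-1] [1..<n-1] []"
    unfolding west_s_def sT_def using west_run_push[of "rev [1..<n-1]" "[]" "[n, n-1]" "[]"] by simp
  also have "\<dots> = stack_run {[2,1]} [n-1] [n] [1..<n-1]"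
    using west_run_pop[of "[1..<n-1]" n "[]" "[n-1]" "[]"] by fastforce
  also have "\<dots> = stack_run {[2,1]} [] [n-1, n] [1..<n-1]"
    using west_run_pop[of "[]" "n-1" "[n]" "[]" "[1..<n-1]"] n by simp
  also have "\<dots> = [1..<n+1]"
    using k by (simp add: stack_run_Nil)
  finally show ?thesis .
qed

lemma west_s_sorts_3: "n \<ge> 2 \<Longrightarrow> west_s (n # rev [1..<n-1] @ [n-1]) = [1..<n+1]"
proof -
  assume n: "n \<ge> 2"
  then obtain k where k: "n = Suc (Suc k)" by (metis add_2_eq_Suc le_Suc_ex)
  have "west_s (n # rev [1..<n-1] @ [n-1]) = stack_run {[2,1]} (rev [1..<n-1] @ [n-1]) [n] []"
    unfolding west_s_def sT_def by simp
  also have "\<dots> = stack_run {[2,1]} [n-1] ([1..<n-1] @ [n]) []"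
    using west_run_push[of "rev [1..<n-1]" "[n]" "[n-1]" "[]"] by (fastforce simp: sorted_append)
  also have "\<dots> = stack_run {[2,1]} [] [n-1, n] [1..<n-1]"
    using west_run_pop[of "[1..<n-1]" "n-1" "[n]" "[]" "[]"] n by simp
  also have "\<dots> = [1..<n+1]"
    using k by (simp add: stack_run_Nil)
  finally show ?thesis .
qed

section \<open>Stack bases with room for two entries\<close>

text \<open>Above the bottom \<open>B\<close> the stack holds at most two entries of \<open>V\<close>, the upper one larger.\<close>
definition two_slot_base :: "nat list set \<Rightarrow> nat list \<Rightarrow> nat set \<Rightarrow> bool" where
  "two_slot_base T B V \<longleftrightarrow> B \<noteq> [] \<and> set B \<inter> V = {} \<and>
     (\<forall>a\<in>V. avoids_all T (a # B)) \<and>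
     (\<forall>a\<in>V. \<forall>e\<in>V. a \<noteq> e \<longrightarrow> (avoids_all T (a # e # B) \<longleftrightarrow> e < a)) \<and>
     (\<forall>a\<in>V. \<forall>c\<in>V. \<forall>d\<in>V. distinct [a,c,d] \<longrightarrow> d < c \<longrightarrow> \<not> avoids_all T (a # c # d # B))"

lemma two_slot_base_single: "two_slot_base {[1,2,3],[3,2,1]} [N] {x. x < N}"
  unfolding two_slot_base_def by auto

lemma two_slot_base_pair: "N' < N \<Longrightarrow> two_slot_base {[1,2,3],[3,2,1]} [N, N'] {x. x < N'}"
  unfolding two_slot_base_def by auto

lemma stack_run_push_on_base:
  assumes "avoids_all T (a # B)" "B \<noteq> []"
  shows "stack_run T (a # w) B out = stack_run T w (a # B) out"
  using assms by (cases B) auto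

lemma two_slot_base_run_max_first:
  assumes "two_slot_base T B V" "m \<in> V" "set w \<subseteq> V" "\<forall>x\<in>set w. x < m"
  shows "stack_run T (m # w) B out = stack_run T w B (out @ [m])"
proof -
  have "stack_run T (m # w) B out = stack_run T w (m # B) out"
    using assms(1,2) by (auto simp: two_slot_base_def intro: stack_run_push_on_base)
  also have "\<dots> = stack_run T w B (out @ [m])"
  proof (cases w)
    case (Cons c w')
    then have "\<not> avoids_all T (c # m # B)"
      using assms unfolding two_slot_base_def by auto
    then show ?thesis
      using Cons assms(1) by (cases B) (auto simp: two_slot_base_def)
  qed (simp add: stack_run_Nil)
  finally show ?thesis .
qed

lemma two_slot_base_run_first_two:
  assumes "two_slot_base T B V" "set (a # c # w) \<subseteq> V" "distinct (a # c # w)"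
  shows "stack_run T (a # c # w) B out = stack_run T w (min a c # B) (out @ [max a c])"
proof -
  obtain b B' where B: "B = b # B'"
    using assms(1) unfolding two_slot_base_def by (cases B) auto
  have base: "\<And>x. x \<in> V \<Longrightarrow> avoids_all T (x # B)"
    and pair: "\<And>x y. x \<in> V \<Longrightarrow> y \<in> V \<Longrightarrow> x \<noteq> y \<Longrightarrow> avoids_all T (x # y # B) \<longleftrightarrow> y < x"
    and triple: "\<And>x y z. x \<in> V \<Longrightarrow> y \<in> V \<Longrightarrow> z \<in> V \<Longrightarrow> distinct [x,y,z] \<Longrightarrow> z < y
       \<Longrightarrow> \<not> avoids_all T (x # y # z # B)"
    using assms(1) unfolding two_slot_base_def by blast+
  show ?thesis
  proof (cases "a < c")
    case True
    have "stack_run T (a # c # w) B out = stack_run T w (c # a # B) out"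
      using B True assms(2,3) base pair by simp
    also have "\<dots> = stack_run T w (a # B) (out @ [c])"
      using B True assms(2,3) triple by (cases w) (auto simp: stack_run_Nil)
    finally show ?thesis using True by simp
  next
    case False
    then show ?thesis
      using B assms(2,3) base pair by simp
  qed
qed

inductive max_in_front :: "nat list \<Rightarrow> bool" where
  Nil: "max_in_front []"
| first: "max_in_front z \<Longrightarrow> \<forall>x\<in>set z. x < m \<Longrightarrow> max_in_front (m # z)"
| second: "max_in_front (a # z) \<Longrightarrow> \<forall>x\<in>set (a # z). x < m \<Longrightarrow> max_in_front (a # m # z)"

lemma max_in_front_distinct: "max_in_front z \<Longrightarrow> distinct z"
  by (induction rule: max_in_front.induct) auto

lemma sort_Cons_max: "\<forall>x\<in>set z. x < m \<Longrightarrow> mset xs = mset (m # z) \<Longrightarrow> sort xs = sort z @ [m]"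
  by (rule properties_for_sort) (auto simp: sorted_append less_imp_le)

lemma two_slot_base_run_max_in_front:
  assumes "max_in_front z" "two_slot_base T B V" "set z \<subseteq> V"
  shows "stack_run T z B out = out @ rev (sort z) @ B"
  using assms
proof (induction arbitrary: out rule: max_in_front.induct)
  case Nil
  then show ?case by (simp add: stack_run_Nil)
next
  case (first z m)
  then have "stack_run T (m # z) B out = out @ [m] @ rev (sort z) @ B"
    using two_slot_base_run_max_first[of T B V m z out] by simp
  moreover have "sort (m # z) = sort z @ [m]"
    using first.hyps(2) by (rule sort_Cons_max) simp
  ultimately show ?case by simp
next
  case (second a z m)
  then have "distinct (a # m # z)"
    using max_in_front_distinct by force
  then have "stack_run T (a # m # z) B out = stack_run T z (a # B) (out @ [m])"
    using second two_slot_base_run_first_two[of T B V a m z out] by (simp add: max_def)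
  also have "\<dots> = stack_run T (a # z) B (out @ [m])"
    using second.prems by (auto simp: two_slot_base_def intro: stack_run_push_on_base[symmetric])
  also have "\<dots> = out @ [m] @ rev (sort (a # z)) @ B"
    using second by simp
  also have "sort (a # m # z) = sort (a # z) @ [m]"
    using second.hyps(2) by (rule sort_Cons_max) simp
  ultimately show ?case by simp
qed

lemma stack_run_slot_decreases:
  assumes "\<forall>a\<in>V. avoids_all T (a # B)"
    and "\<forall>a\<in>V. \<forall>e'\<in>V. e' \<le> e \<longrightarrow> e' < a \<longrightarrow> avoids_all T (a # e' # B)"
    and "set inp \<subseteq> V" "e \<in> V"
  shows "\<exists>ys w. w \<le> e \<and> stack_run T inp (S @ e # B) out = ys @ w # B"
  using assms(2-)
proof (induction inp arbitrary: S e out)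
  case Nil
  then show ?case by (auto simp: stack_run_Nil)
next
  case (Cons a inp)
  note IH = Cons.IH
  from Cons.prems show ?case
  proof (induction S arbitrary: out)
    case Nil
    show ?case
    proof (cases "avoids_all T (a # e # B)")
      case True
      then show ?thesis
        using IH[of e "[a]"] Nil.prems by auto
    next
      case False
      then have "a \<le> e"
        using Nil.prems by force
      have "stack_run T (a # inp) ([] @ e # B) out = stack_run T (a # inp) B (out @ [e])"
        using False by simp
      also have "\<dots> = stack_run T inp ([] @ a # B) (out @ [e])"
        using assms(1) Nil.prems by (cases B) auto
      finally show ?thesis
        using IH[of a "[]" "out @ [e]"] Nil.prems \<open>a \<le> e\<close> by force
    qed
  next
    case (Cons s S)
    then show ?case
      using IH[of e "a # s # S"] by (cases "avoids_all T (a # s # S @ e # B)") auto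
  qed
qed

lemma stack_run_large_before_slot:
  assumes "\<forall>a\<in>V. avoids_all T (a # B)"
    and "\<forall>a\<in>V. \<forall>e'\<in>V. e' \<le> e \<longrightarrow> e' < a \<longrightarrow> avoids_all T (a # e' # B)"
    and "set inp \<subseteq> V" "e \<in> V" "g \<in> set inp \<union> set S" "e < g" "g \<notin> set B"
  shows "\<exists>w\<le>e. subseq [g, w] (stack_run T inp (S @ e # B) out)"
proof -
  obtain ys w where w: "w \<le> e" and F: "stack_run T inp (S @ e # B) out = ys @ w # B"
    using stack_run_slot_decreases[OF assms(1-4)] by blast
  have "g \<in> set (ys @ w # B)"
    using assms(5) F[symmetric] by (auto simp: set_stack_run)
  then have "g \<in> set ys"
    using assms(6,7) w by auto
  then show ?thesis
    using F w subseq_pairI[of g ys w "w # B"] by auto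
qed

lemma two_slot_base_run_late_max:
  assumes "two_slot_base T B V" "set (z1 # z2 # w) \<subseteq> V" "distinct (z1 # z2 # w)"
    and "m \<in> set w" "z1 < m" "z2 < m"
  shows "\<not> avoids_231 (stack_run T (z1 # z2 # w) B [])"
proof
  assume avoids: "avoids_231 (stack_run T (z1 # z2 # w) B [])"
  have run: "stack_run T (z1 # z2 # w) B [] = max z1 z2 # stack_run T w ([] @ min z1 z2 # B) []"
    using two_slot_base_run_first_two[OF assms(1-3), of "[]"] stack_run_out[of T w _ "[max z1 z2]"]
    by simp
  have "\<exists>v\<le>min z1 z2. subseq [m, v] (stack_run T w ([] @ min z1 z2 # B) [])"
    using assms by (intro stack_run_large_before_slot[where V = V]) (auto simp: two_slot_base_def min_def)
  then obtain v where "v \<le> min z1 z2" "subseq [max z1 z2, m, v] (stack_run T (z1 # z2 # w) B [])"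
    using run by auto
  moreover have "min z1 z2 < max z1 z2" "max z1 z2 < m"
    using assms(3,5,6) by auto
  ultimately show False
    using avoids_231D[OF avoids] by (meson le_less_trans)
qed

lemma two_slot_base_run_avoids_231_imp:
  assumes "two_slot_base T B V" "set z \<subseteq> V" "distinct z" "avoids_231 (stack_run T z B [])"
  shows "max_in_front z"
  using assms(2-)
proof (induction "length z" arbitrary: z rule: less_induct)
  case less
  show ?case
  proof (cases z)
    case (Cons z1 z')
    define m where "m = Max (set z)"
    have m: "m \<in> set z" "\<forall>x\<in>set z. x \<noteq> m \<longrightarrow> x < m"
      using Cons m_def Max_in[of "set z"] by (auto simp: le_neq_implies_less)
    show ?thesis
    proof (cases "z1 = m")
      case True
      then have "\<forall>x\<in>set z'. x < m"
        using m less.prems(2) Cons by auto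
      then have "stack_run T z B [] = m # stack_run T z' B []"
        using two_slot_base_run_max_first[OF assms(1), of m z' "[]"] less.prems(1) Cons True
          stack_run_out[of T z' B "[m]"] by auto
      then show ?thesis
        using less Cons True m by (auto simp: avoids_231_Cons intro: max_in_front.first)
    next
      case False
      then obtain z2 w where z: "z = z1 # z2 # w"
        using Cons m by (cases z') auto
      show ?thesis
      proof (cases "z2 = m")
        case True
        have run: "stack_run T z B [] = max z1 z2 # stack_run T w (min z1 z2 # B) []"
          using two_slot_base_run_first_two[OF assms(1), of z1 z2 w "[]"] less.prems(1,2) z
            stack_run_out[of T w _ "[max z1 z2]"] by simp
        have "stack_run T w (min z1 z2 # B) [] = stack_run T (z1 # w) B []"
          using assms(1) less.prems(1) m z \<open>z1 \<noteq> m\<close> True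
          by (auto simp: two_slot_base_def min_def intro: stack_run_push_on_base[symmetric])
        moreover have "\<forall>x\<in>set (z1 # w). x < m"
          using m z True less.prems(2) by auto
        ultimately have "max_in_front (z1 # w)"
          using less run z True by (auto simp: avoids_231_Cons max_def)
        then show ?thesis
          using z True \<open>\<forall>x\<in>set (z1 # w). x < m\<close> by (simp add: max_in_front.second)
      next
        case False
        then show ?thesis
          using two_slot_base_run_late_max[OF assms(1), of z1 z2 w m] less.prems m z \<open>z1 \<noteq> m\<close>
          by auto
      qed
    qed
  qed (simp add: max_in_front.Nil)
qed

lemma mono3_max_blocked:
  assumes "u \<in> set S" "b < u" "u < n"
  shows "\<not> avoids_all {[1,2,3],[3,2,1]} (n # S @ [b])"
proof -
  have "subseq [n, u, b] (n # S @ [b])"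
    using assms(1) subseq_pairI[of u S b "[b]"] by simp
  then have "has_chain3 (>) (n # S @ [b])"
    unfolding has_chain3_iff using assms(2,3) by blast
  then show ?thesis by simp
qed

text \<open>While \<open>u\<close> lies above \<open>b\<close> on the stack, the maximum \<open>n\<close> cannot be pushed,
  so \<open>u\<close> leaves the stack before \<open>n\<close> enters it.\<close>
lemma mono3_run_max_after:
  assumes "stack_run T inp st out = F" "T = {[1,2,3],[3,2,1]}" "st = S @ [b]" "n \<in> set inp"
    "\<forall>x\<in>set inp \<union> set st. x \<le> n" "distinct (inp @ st)" "b < n"
    "u \<in> set S \<union> set (takeWhile (\<lambda>x. x \<noteq> n) inp)" "b < u"
  shows "subseq [u, n] F"
  using assms
proof (induction T inp st out arbitrary: S rule: stack_run.induct)
  case (4 T a inp s st out)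
  show ?case
  proof (cases "avoids_all T (a # s # st)")
    case True
    show ?thesis
    proof (cases "a = n")
      case True
      then have "u \<in> set S" "u \<noteq> n"
        using 4 by auto
      moreover have "u \<le> n"
        using 4(5,7) \<open>u \<in> set S\<close> by auto
      ultimately show ?thesis
        using mono3_max_blocked[of u S b n] \<open>avoids_all T (a # s # st)\<close> True 4(4,5,11) by simp
    next
      case False
      have F: "stack_run T inp (a # s # st) out = F"
        using 4(3) True by simp
      show ?thesis
        by (rule 4(1)[OF True F, of "a # S"]) (use 4(4-) False in auto)
    qed
  next
    case False
    then have F: "stack_run T (a # inp) st (out @ [s]) = F"
      using 4(3) by simp
    show ?thesis
    proof (cases S)
      case Nil
      then show ?thesis using 4 by simp
    next
      case (Cons s' S')
      then have ss: "s' = s" "st = S' @ [b]"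
        using 4 by auto
      show ?thesis
      proof (cases "u = s")
        case True
        have "n \<in> set (stack_run T (a # inp) st [])"
          using 4(6) by (auto simp: set_stack_run)
        then show ?thesis
          using F stack_run_out[of T "a # inp" st "out @ [s]"] subseq_pairI[of u "out @ [s]" n] True
          by force
      next
        case False
        then show ?thesis
          using 4(2)[OF \<open>\<not> avoids_all T (a # s # st)\<close> F, of S'] 4(4-) ss Cons by auto
      qed
    qed
  qed
qed auto

section \<open>\<open>Sort\<^sub>n(123,321)\<close> as three families\<close>

definition max_in_front_perms :: "nat \<Rightarrow> nat list set" where
  "max_in_front_perms k = {z \<in> perms k. max_in_front z}"

definition Sort_family :: "nat \<Rightarrow> nat list set" where
  "Sort_family n = (\<lambda>z. n # z) ` max_in_front_perms (n - 1)
     \<union> (\<lambda>z. (n - 1) # n # z) ` max_in_front_perms (n - 2)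
     \<union> (\<lambda>z. (n - 1) # (n - 2) # n # z) ` max_in_front_perms (n - 3)"

lemma mono3_run_large_before_slot:
  assumes "e < b" "b \<notin> set inp" "e < g" "g \<in> set inp"
  shows "\<exists>w\<le>e. subseq [g, w] (stack_run {[1,2,3],[3,2,1]} inp [e, b] out)"
proof -
  have "\<exists>w\<le>e. subseq [g, w] (stack_run {[1,2,3],[3,2,1]} inp ([] @ e # [b]) out)"
    by (rule stack_run_large_before_slot[where V = "insert e (set inp)"]) (use assms in auto)
  then show ?thesis by simp
qed

lemma mono3_run_two_small:
  assumes "l1 < b" "l2 < b" "l1 \<noteq> l2" "c \<noteq> l2"
  shows "stack_run {[1,2,3],[3,2,1]} (l1 # l2 # c # w) [b] []
    = max l1 l2 # stack_run {[1,2,3],[3,2,1]} (c # w) [min l1 l2, b] []"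
proof (cases "l1 < l2")
  case True
  have "c < l2 \<or> l2 < c"
    using assms(4) by arith
  then have "stack_run {[1,2,3],[3,2,1]} (l1 # l2 # c # w) [b] []
      = stack_run {[1,2,3],[3,2,1]} (c # w) [l1, b] [l2]"
    using True assms(2) by auto
  then show ?thesis
    using True stack_run_out[of _ "c # w" "[l1, b]" "[l2]"] by (simp del: stack_run.simps)
next
  case False
  then have "l2 < l1"
    using assms(3) by simp
  then have "stack_run {[1,2,3],[3,2,1]} (l1 # l2 # c # w) [b] []
      = stack_run {[1,2,3],[3,2,1]} (c # w) [l2, b] [l1]"
    using assms(1) by simp
  then show ?thesis
    using \<open>l2 < l1\<close> stack_run_out[of _ "c # w" "[l2, b]" "[l1]"] by (simp del: stack_run.simps)
qed

lemma two_slot_base_perms: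
  assumes "two_slot_base T B V" "{1..k} \<subseteq> V" "z \<in> perms k" "avoids_231 (stack_run T z B [])"
  shows "z \<in> max_in_front_perms k"
proof -
  have "distinct z" "set z \<subseteq> V"
    using assms(2,3) unfolding perms_def by auto
  then show ?thesis
    using two_slot_base_run_avoids_231_imp[OF assms(1) _ _ assms(4)] assms(3)
    unfolding max_in_front_perms_def by simp
qed

context
  fixes n b :: nat and x :: "nat list"
  assumes perm: "b # x \<in> perms n" and n4: "4 \<le> n"
    and avoids: "avoids_231 (stack_run {[1,2,3],[3,2,1]} x [b] [])"
begin

private lemma perm_facts: "distinct (b # x)" "set (b # x) = {1..n}"
  using perm unfolding perms_def by auto

private lemma set_tail: "set x = {1..n} - {b}" "b \<notin> set x" "distinct x"
  using perm_facts by auto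

private lemma entry_le: "y \<in> set (b # x) \<Longrightarrow> y \<le> n"
  using perm_facts(2) by (simp add: set_eq_iff)

lemma sortable_first_eq_max: "b = n \<Longrightarrow> x \<in> max_in_front_perms (n - 1)"
proof -
  assume "b = n"
  have "set x = {1..n} - {n}"
    using perm_facts \<open>b = n\<close> by auto
  also have "\<dots> = {1..n - 1}"
    by auto
  finally have "x \<in> perms (n - 1)"
    using perm_facts unfolding perms_def by simp
  moreover have "{1..n - 1} \<subseteq> {y. y < n}"
    using n4 by auto
  ultimately show ?thesis
    using two_slot_base_perms[OF two_slot_base_single] avoids \<open>b = n\<close> by blast
qed

text \<open>Otherwise \<open>u\<close>, \<open>n\<close>, \<open>b\<close> would form a 231 in the output, \<open>b\<close> staying at the bottom.\<close>
lemma sortable_before_max_smaller: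
  assumes "b < n" "u \<in> set (takeWhile (\<lambda>y. y \<noteq> n) x)"
  shows "u < b"
proof (rule ccontr)
  assume "\<not> u < b"
  have u: "u \<in> set x" "u \<noteq> n"
    using set_takeWhileD[OF assms(2)] by auto
  have "b \<notin> set x" "set x \<subseteq> {1..n}"
    using perm_facts by auto
  with u \<open>\<not> u < b\<close> have "b < u" "u < n"
    using le_neq_implies_less by fastforce+
  have "n \<in> set (b # x)"
    using perm_facts(2) assms(1) by simp
  then have "n \<in> set x"
    using assms(1) by simp
  then have "subseq [u, n] (stack_run {[1,2,3],[3,2,1]} x [b] [])"
    using perm_facts assms \<open>b < u\<close>
    by (intro mono3_run_max_after[OF refl refl, where S = "[]"]) auto
  moreover obtain ys where F: "stack_run {[1,2,3],[3,2,1]} x [b] [] = ys @ [b]"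
    using stack_run_keeps_bottom[of x "{[1,2,3],[3,2,1]}" "[b]" "[]" "[]"] by auto
  ultimately have "subseq [u, n, b] (ys @ [b])"
    using assms(1) by (intro subseq_pair_snoc) (simp_all add: F)
  then show False
    using avoids_231D[OF avoids, of u n b] F \<open>b < u\<close> \<open>u < n\<close> by simp
qed

private lemma max_second_run:
  assumes x: "x = n # z"
  shows "b < n" "set z = {1..n} - {b} - {n}" "distinct z"
    and "stack_run {[1,2,3],[3,2,1]} x [b] [] = stack_run {[1,2,3],[3,2,1]} z [n, b] []"
    and "\<exists>zs. stack_run {[1,2,3],[3,2,1]} x [b] [] = zs @ [n, b]"
proof -
  have "b \<noteq> n" "n \<notin> set z"
    using set_tail(2,3) x by auto
  then show b: "b < n"
    using entry_le[of b] by simp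
  have "set z = insert n (set z) - {n}"
    using \<open>n \<notin> set z\<close> by simp
  also have "\<dots> = {1..n} - {b} - {n}"
    using set_tail(1) x by simp
  finally show z: "set z = {1..n} - {b} - {n}" .
  show "distinct z"
    using set_tail(3) x by simp
  show F: "stack_run {[1,2,3],[3,2,1]} x [b] [] = stack_run {[1,2,3],[3,2,1]} z [n, b] []"
    using x b by simp
  have "\<forall>a\<in>set z. a < n \<and> a \<noteq> b"
    using z by auto
  then have "\<forall>a\<in>set z. avoids_all {[1,2,3],[3,2,1]} (a # [n, b])"
    using b by auto
  then show "\<exists>zs. stack_run {[1,2,3],[3,2,1]} x [b] [] = zs @ [n, b]"
    using stack_run_keeps_bottom[of z _ "[n, b]" "[]"] F by simp
qed

text \<open>Otherwise \<open>n - 1\<close> would be output before \<open>n\<close> and \<open>b\<close>, forming a 231.\<close>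
lemma sortable_max_second_first:
  assumes x: "x = n # z"
  shows "b = n - 1"
proof (rule ccontr)
  assume "b \<noteq> n - 1"
  note run = max_second_run[OF x]
  obtain zs where zs: "stack_run {[1,2,3],[3,2,1]} x [b] [] = zs @ [n, b]"
    using run(5) by blast
  have "set (zs @ [n, b]) = set (stack_run {[1,2,3],[3,2,1]} z [n, b] [])"
    using zs run(4) by simp
  also have "\<dots> = set z \<union> {n, b}"
    by (simp add: set_stack_run)
  finally have zs_set: "set (zs @ [n, b]) = set z \<union> {n, b}" .
  have "n - 1 \<in> set z"
    using n4 \<open>b \<noteq> n - 1\<close> unfolding run(2) by simp arith
  then have "n - 1 \<in> set (zs @ [n, b])"
    unfolding zs_set by simp
  moreover have "n - 1 \<noteq> n"
    using n4 by arith
  ultimately have "n - 1 \<in> set zs"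
    using \<open>b \<noteq> n - 1\<close> by simp
  then have "subseq [n - 1, n, b] (zs @ [n, b])"
    by (simp add: subseq_Cons_appendI)
  moreover have "b < n - 1"
    using run(1) \<open>b \<noteq> n - 1\<close> by simp
  ultimately show False
    using avoids_231D[OF avoids, of "n - 1" n b] zs n4 by simp
qed

lemma sortable_max_second:
  assumes x: "x = n # z"
  shows "b = n - 1 \<and> z \<in> max_in_front_perms (n - 2)"
proof -
  note run = max_second_run[OF x]
  have b_eq: "b = n - 1"
    using sortable_max_second_first[OF x] .
  have "{1..n} - {n - 1} - {n} = {1..n - 2}" "{1..n - 2} \<subseteq> {y. y < n - 1}"
    using n4 by auto
  then have "z \<in> perms (n - 2)"
    using run(2,3) b_eq unfolding perms_def by simp
  then have "z \<in> max_in_front_perms (n - 2)"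
    using two_slot_base_perms[OF two_slot_base_pair[of "n - 1" n]] avoids run(4) b_eq n4
      \<open>{1..n - 2} \<subseteq> {y. y < n - 1}\<close> by simp
  with b_eq show ?thesis by simp
qed

private lemma max_third_pushes:
  assumes x: "x = l # n # z"
  shows "l < b" "b < n" "l \<noteq> n"
    and "stack_run {[1,2,3],[3,2,1]} x [b] [] = stack_run {[1,2,3],[3,2,1]} z [n, l, b] []"
proof -
  show "b < n"
    using set_tail(2) entry_le[of b] x by (auto simp: le_neq_implies_less)
  show "l \<noteq> n"
    using set_tail(3) x by auto
  then show "l < b"
    using sortable_before_max_smaller[OF \<open>b < n\<close>, of l] x by simp
  with \<open>b < n\<close> show "stack_run {[1,2,3],[3,2,1]} x [b] [] = stack_run {[1,2,3],[3,2,1]} z [n, l, b] []"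
    using x by simp
qed

private lemma max_third_next_smaller:
  assumes x: "x = l # n # r # Q"
  shows "r < l"
proof (rule ccontr)
  assume "\<not> r < l"
  note pushes = max_third_pushes[OF x]
  have "r \<noteq> l" "r \<noteq> n" "r \<noteq> b"
    using set_tail(2,3) x by auto
  then have "l < r" "r < n"
    using \<open>\<not> r < l\<close> entry_le[of r] x by auto
  then have "stack_run {[1,2,3],[3,2,1]} x [b] [] = stack_run {[1,2,3],[3,2,1]} Q [r, n, l, b] []"
    using pushes x by auto
  then have sub: "subseq [r, n, l, b] (stack_run {[1,2,3],[3,2,1]} x [b] [])"
    using subseq_stack_run by metis
  show False
  proof (cases "b < r")
    case True
    have "subseq [r, n, b] [r, n, l, b]"
      by simp
    then show False
      using avoids_231D[OF avoids] sub True \<open>r < n\<close> subseq_order.trans by blast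
  next
    case False
    have "subseq [r, n, l] [r, n, l, b]"
      by simp
    then show False
      using avoids_231D[OF avoids] sub \<open>l < r\<close> \<open>r < n\<close> subseq_order.trans by blast
  qed
qed

private lemma max_third_run:
  assumes x: "x = l # n # r # Q"
  shows "stack_run {[1,2,3],[3,2,1]} x [b] [] = n # l # stack_run {[1,2,3],[3,2,1]} Q [r, b] []"
proof -
  note pushes = max_third_pushes[OF x]
  have "r < l"
    using max_third_next_smaller[OF x] .
  then have "stack_run {[1,2,3],[3,2,1]} x [b] [] = stack_run {[1,2,3],[3,2,1]} Q [r, b] [n, l]"
    using pushes x by simp
  then show ?thesis
    using stack_run_out[of _ Q "[r, b]" "[n, l]"] by simp
qed

private lemma max_third_rest_smaller:
  assumes x: "x = l # n # r # Q" and g: "g \<in> set Q"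
  shows "g < l"
proof (rule ccontr)
  assume "\<not> g < l"
  moreover have "g \<noteq> l" "b \<notin> set Q"
    using set_tail(2,3) x g by auto
  ultimately have "l < g"
    by simp
  moreover have "r < l" "l < b"
    using max_third_next_smaller[OF x] max_third_pushes[OF x] by simp_all
  ultimately obtain w where "w \<le> r" "subseq [g, w] (stack_run {[1,2,3],[3,2,1]} Q [r, b] [])"
    using mono3_run_large_before_slot[of r b Q g] \<open>b \<notin> set Q\<close> g by auto
  then have "subseq [l, g, w] (stack_run {[1,2,3],[3,2,1]} x [b] [])"
    using max_third_run[OF x] by (simp add: subseq_Cons')
  then show False
    using avoids_231D[OF avoids] \<open>w \<le> r\<close> \<open>r < l\<close> \<open>l < g\<close> by fastforce
qed

lemma sortable_max_third:
  assumes x: "x = l # n # z"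
  shows "b = n - 1 \<and> l = n - 2 \<and> z \<in> max_in_front_perms (n - 3)"
proof -
  note pushes = max_third_pushes[OF x]
  have "length (b # x) = n"
    using perm_facts distinct_card by fastforce
  then obtain r Q where z: "z = r # Q"
    using x n4 by (cases z) auto
  have small: "\<forall>y\<in>set z. y < l"
    using max_third_next_smaller max_third_rest_smaller x z by auto
  have set_x: "{1..n} = {b, l, n} \<union> set z"
    using perm_facts(2) x by auto
  have "n - 1 \<in> {1..n}" "n - 1 \<noteq> n"
    using n4 by auto
  then have b_eq: "b = n - 1"
    using set_x small pushes by fastforce
  have "n - 2 \<in> {1..n}" "n - 2 \<noteq> n" "n - 2 \<noteq> n - 1"
    using n4 by auto
  then have l_eq: "l = n - 2"
    using set_x small pushes b_eq by fastforce
  have "set z = {1..n} - {b, l, n}"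
    using set_tail x by auto
  also have "\<dots> = {1..n - 3}"
    using b_eq l_eq n4 by auto
  finally have "z \<in> perms (n - 3)"
    using set_tail(3) x unfolding perms_def by simp
  moreover have "avoids_231 (stack_run {[1,2,3],[3,2,1]} z [n - 1] [])"
    using avoids max_third_run[of l r Q] x z b_eq by (simp add: avoids_231_Cons)
  moreover have "{1..n - 3} \<subseteq> {y. y < n - 1}"
    by auto
  ultimately have "z \<in> max_in_front_perms (n - 3)"
    using two_slot_base_perms[OF two_slot_base_single] by blast
  with b_eq l_eq show ?thesis by simp
qed

text \<open>The larger of \<open>l1\<close> and \<open>l2\<close> is output first, then \<open>n\<close>, then an entry not exceeding
  the smaller one.\<close>
lemma sortable_max_late:
  assumes x: "x = l1 # l2 # w" and "n \<in> set w"
  shows False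
proof -
  have "n \<in> set x"
    using x assms(2) by simp
  then have "b < n"
    using set_tail(2) entry_le[of b] by (metis le_neq_implies_less list.set_intros(1))
  have d: "distinct (b # l1 # l2 # w)"
    using perm_facts(1) x by simp
  have "l1 \<noteq> n" "l2 \<noteq> n"
    using d assms(2) by auto
  then have "l1 < b" "l2 < b"
    using sortable_before_max_smaller[OF \<open>b < n\<close>] x by simp_all
  obtain c w' where w: "w = c # w'"
    using assms(2) by (cases w) auto
  have run: "stack_run {[1,2,3],[3,2,1]} x [b] []
      = max l1 l2 # stack_run {[1,2,3],[3,2,1]} w [min l1 l2, b] []"
    using mono3_run_two_small[of l1 b l2 c w'] \<open>l1 < b\<close> \<open>l2 < b\<close> d x w by simp
  have "min l1 l2 < b" "b \<notin> set w" "min l1 l2 < n"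
    using \<open>l1 < b\<close> \<open>l2 < b\<close> d \<open>b < n\<close> by auto
  then obtain v where "v \<le> min l1 l2" "subseq [n, v] (stack_run {[1,2,3],[3,2,1]} w [min l1 l2, b] [])"
    using mono3_run_large_before_slot assms(2) by blast
  moreover have "max l1 l2 < n"
    using \<open>l1 < b\<close> \<open>l2 < b\<close> \<open>b < n\<close> by simp
  moreover have "min l1 l2 < max l1 l2"
    using d by (auto simp: min_def max_def)
  ultimately show False
    using avoids_231D[OF avoids, of "max l1 l2" n v] run by fastforce
qed

end

lemma Sort_imp_family:
  assumes "n \<ge> 4" "x \<in> perms n" "avoids_231 (sT {[1,2,3],[3,2,1]} x)"
  shows "x \<in> Sort_family n"
proof -
  obtain b x' where x: "x = b # x'"
    using assms(1,2) unfolding perms_def by (cases x) auto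
  have ctx: "b # x' \<in> perms n" "4 \<le> n" "avoids_231 (stack_run {[1,2,3],[3,2,1]} x' [b] [])"
    using assms x by (simp_all add: sT_def)
  show ?thesis
  proof (cases "b = n")
    case True
    then show ?thesis
      using sortable_first_eq_max[OF ctx] x unfolding Sort_family_def by blast
  next
    case False
    then have "n \<in> set x'"
      using assms(1,2) x unfolding perms_def by auto
    then obtain l1 x'' where x': "x' = l1 # x''"
      by (cases x') auto
    show ?thesis
    proof (cases "l1 = n")
      case True
      then show ?thesis
        using sortable_max_second[OF ctx] x x' unfolding Sort_family_def by blast
    next
      case False
      then obtain l2 w where x'': "x'' = l2 # w"
        using \<open>n \<in> set x'\<close> x' by (cases x'') auto
      show ?thesis
      proof (cases "l2 = n")
        case True
        then show ?thesis
          using sortable_max_third[OF ctx] x x' x'' unfolding Sort_family_def by blast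
      next
        case False
        then show ?thesis
          using sortable_max_late[OF ctx] \<open>n \<in> set x'\<close> \<open>l1 \<noteq> n\<close> x' x'' by auto
      qed
    qed
  qed
qed

lemma sort_perms:
  assumes "z \<in> perms k"
  shows "sort z = [1..<k+1]"
proof (rule properties_for_sort)
  have "set [1..<k+1] = {1..k}"
    by (simp only: set_upt atLeastLessThanSuc_atLeastAtMost Suc_eq_plus1[symmetric])
  then have "set [1..<k+1] = set z" "distinct z"
    using assms unfolding perms_def by simp_all
  then show "mset [1..<k+1] = mset z"
    using set_eq_iff_mset_eq_distinct[of "[1..<k+1]" z] distinct_upt by blast
  show "sorted [1..<k+1]"
    by (rule sorted_upt)
qed

lemma max_in_front_perms_run:
  assumes "z \<in> max_in_front_perms k" "two_slot_base T B V" "{1..k} \<subseteq> V"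
  shows "stack_run T z B out = out @ rev [1..<k+1] @ B"
  using assms two_slot_base_run_max_in_front[of z T B V out] sort_perms[of z k]
  unfolding max_in_front_perms_def perms_def by auto

lemma sT_family_1:
  assumes "n \<ge> 2" "z \<in> max_in_front_perms (n - 1)"
  shows "sT {[1,2,3],[3,2,1]} (n # z) = rev [1..<n] @ [n]"
proof -
  have "{1..n - 1} \<subseteq> {y. y < n}"
    by auto
  then show ?thesis
    using max_in_front_perms_run[OF assms(2) two_slot_base_single, of n "[]"] assms(1)
    by (simp add: sT_def)
qed

lemma sT_family_2:
  assumes "n \<ge> 3" "z \<in> max_in_front_perms (n - 2)"
  shows "sT {[1,2,3],[3,2,1]} ((n - 1) # n # z) = rev [1..<n - 1] @ [n, n - 1]"
proof -
  have "{1..n - 2} \<subseteq> {y. y < n - 1}" "n - 2 + 1 = n - 1"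
    using assms(1) by auto
  then show ?thesis
    using max_in_front_perms_run[OF assms(2) two_slot_base_pair[of "n - 1" n], of "[]"] assms(1)
    by (simp add: sT_def)
qed

lemma sT_family_3:
  assumes "n \<ge> 4" "z \<in> max_in_front_perms (n - 3)"
  shows "sT {[1,2,3],[3,2,1]} ((n - 1) # (n - 2) # n # z) = n # rev [1..<n - 1] @ [n - 1]"
proof -
  obtain k where n: "n = k + 4"
    using assms(1) le_Suc_ex by (metis add.commute)
  obtain a z' where z: "z = a # z'"
    using assms unfolding max_in_front_perms_def perms_def by (cases z) auto
  then have "a \<in> {1..k + 1}"
    using assms(2) unfolding n max_in_front_perms_def perms_def by auto
  then have "sT {[1,2,3],[3,2,1]} ((n - 1) # (n - 2) # n # z)
      = stack_run {[1,2,3],[3,2,1]} z [k + 3] [k + 4, k + 2]"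
    unfolding n z by (auto simp: sT_def ac_simps)
  also have "\<dots> = [k + 4, k + 2] @ rev [1..<k + 2] @ [k + 3]"
  proof -
    have "{1..n - 3} \<subseteq> {y. y < k + 3}"
      unfolding n by auto
    then show ?thesis
      using max_in_front_perms_run[OF assms(2) two_slot_base_single, of _ "[k + 4, k + 2]"]
      unfolding n by simp
  qed
  finally show ?thesis
    unfolding n by (simp add: numeral_eq_Suc)
qed

lemma perms_append:
  assumes "ys \<in> perms k" "distinct zs" "set zs = {k<..n}" "k \<le> n"
  shows "zs @ ys \<in> perms n"
  using assms unfolding perms_def by auto

lemma Sort_family_subset:
  assumes "n \<ge> 4"
  shows "Sort_family n \<subseteq> Sort n [1,2,3] [3,2,1]"
proof
  fix x
  assume "x \<in> Sort_family n"
  then consider (first) z where "z \<in> max_in_front_perms (n - 1)" "x = [n] @ z"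
    | (second) z where "z \<in> max_in_front_perms (n - 2)" "x = [n - 1, n] @ z"
    | (third) z where "z \<in> max_in_front_perms (n - 3)" "x = [n - 1, n - 2, n] @ z"
    unfolding Sort_family_def by auto
  then have "x \<in> perms n \<and> west_s (sT {[1,2,3],[3,2,1]} x) = [1..<n+1]"
  proof cases
    case first
    moreover have "{n - 1<..n} = {n}"
      using assms by auto
    ultimately show ?thesis
      using assms perms_append[of z "n - 1" "[n]" n] sT_family_1 west_s_sorts_1
      unfolding max_in_front_perms_def by simp
  next
    case second
    moreover have "{n - 2<..n} = {n - 1, n}" "distinct [n - 1, n]"
      using assms by auto
    ultimately show ?thesis
      using assms perms_append[of z "n - 2" "[n - 1, n]" n] sT_family_2 west_s_sorts_2
      unfolding max_in_front_perms_def by simp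
  next
    case third
    moreover have "{n - 3<..n} = {n - 1, n - 2, n}" "distinct [n - 1, n - 2, n]"
      using assms by auto
    ultimately show ?thesis
      using assms perms_append[of z "n - 3" "[n - 1, n - 2, n]" n] sT_family_3 west_s_sorts_3
      unfolding max_in_front_perms_def by auto
  qed
  then show "x \<in> Sort n [1,2,3] [3,2,1]"
    unfolding Sort_def by simp
qed

section \<open>Counting\<close>

lemma perms_insert_max:
  assumes "z1 @ z2 \<in> perms k"
  shows "z1 @ Suc k # z2 \<in> perms (Suc k)"
proof -
  have z: "distinct (z1 @ z2)" "set (z1 @ z2) = {1..k}"
    using assms unfolding perms_def by simp_all
  have "Suc k \<notin> set (z1 @ z2)"
    unfolding z(2) by simp
  then have "distinct (z1 @ Suc k # z2)"
    using z(1) by auto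
  moreover have "set (z1 @ Suc k # z2) = insert (Suc k) (set (z1 @ z2))"
    by auto
  ultimately show ?thesis
    unfolding perms_def z(2) by (simp add: atLeastAtMostSuc_conv)
qed

lemma perms_remove_max:
  assumes "xs \<in> perms (Suc k)" "m \<in> set xs" "\<forall>x\<in>set xs. x \<noteq> m \<longrightarrow> x < m"
  shows "m = Suc k" "remove1 m xs \<in> perms k"
proof -
  have xs: "distinct xs" "set xs = insert (Suc k) {1..k}"
    using assms(1) atLeastAtMostSuc_conv[of 1 k] unfolding perms_def by simp_all
  then have "m \<le> Suc k"
    using assms(2) by auto
  then show "m = Suc k"
    using assms(3) xs(2) by (metis insertI1 le_neq_implies_less less_not_sym)
  then show "remove1 m xs \<in> perms k"
    using xs unfolding perms_def by (simp add: set_remove1_eq)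
qed

lemma perms_length: "xs \<in> perms k \<Longrightarrow> length xs = k"
  unfolding perms_def using distinct_card by fastforce

lemma finite_max_in_front_perms: "finite (max_in_front_perms k)"
proof (rule finite_subset)
  show "max_in_front_perms k \<subseteq> {xs. set xs \<subseteq> {1..k} \<and> length xs = k}"
    unfolding max_in_front_perms_def using perms_length by (auto simp: perms_def)
  show "finite {xs. set xs \<subseteq> {1..k} \<and> length xs = k}"
    by (rule finite_lists_length_eq) simp
qed

lemma max_in_front_perms_1: "max_in_front_perms 1 = {[1]}"
proof
  show "max_in_front_perms 1 \<subseteq> {[1]}"
  proof
    fix z
    assume z: "z \<in> max_in_front_perms 1"
    then have "length z = 1" "set z = {1}"
      using perms_length unfolding max_in_front_perms_def perms_def by auto
    then show "z \<in> {[1]}"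
      by (cases z) auto
  qed
  show "{[1]} \<subseteq> max_in_front_perms 1"
    unfolding max_in_front_perms_def perms_def by (auto intro: max_in_front.intros)
qed

lemma max_in_front_perms_Suc_subset:
  "max_in_front_perms (Suc k)
    \<subseteq> (\<lambda>z. Suc k # z) ` max_in_front_perms k \<union> (\<lambda>z. hd z # Suc k # tl z) ` max_in_front_perms k"
proof
  fix z
  assume "z \<in> max_in_front_perms (Suc k)"
  then have "max_in_front z" and zp: "z \<in> perms (Suc k)"
    unfolding max_in_front_perms_def by auto
  then show "z \<in> (\<lambda>z. Suc k # z) ` max_in_front_perms k \<union> (\<lambda>z. hd z # Suc k # tl z) ` max_in_front_perms k"
  proof cases
    case Nil
    then show ?thesis
      using perms_length[OF zp] by simp
  next
    case (first z' m)
    then have "m \<in> set z" "\<forall>x\<in>set z. x \<noteq> m \<longrightarrow> x < m"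
      by simp_all
    from perms_remove_max[OF zp this] have "m = Suc k" "z' \<in> perms k"
      using first(1) by simp_all
    then show ?thesis
      using first unfolding max_in_front_perms_def by blast
  next
    case (second a z' m)
    then have "m \<in> set z" "\<forall>x\<in>set z. x \<noteq> m \<longrightarrow> x < m" "a \<noteq> m"
      by auto
    from perms_remove_max[OF zp this(1,2)] have "m = Suc k" "a # z' \<in> perms k"
      using second(1) \<open>a \<noteq> m\<close> by simp_all
    then have "z = (\<lambda>z. hd z # Suc k # tl z) (a # z')" "a # z' \<in> max_in_front_perms k"
      using second unfolding max_in_front_perms_def by simp_all
    then show ?thesis
      by blast
  qed
qed

lemma max_in_front_perms_Suc_superset:
  assumes "k \<ge> 1"
  shows "(\<lambda>z. Suc k # z) ` max_in_front_perms k \<union> (\<lambda>z. hd z # Suc k # tl z) ` max_in_front_perms k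
    \<subseteq> max_in_front_perms (Suc k)"
proof
  fix y
  assume "y \<in> (\<lambda>z. Suc k # z) ` max_in_front_perms k \<union> (\<lambda>z. hd z # Suc k # tl z) ` max_in_front_perms k"
  then obtain z where z: "z \<in> perms k" "max_in_front z"
    and y: "y = Suc k # z \<or> y = hd z # Suc k # tl z"
    unfolding max_in_front_perms_def by blast
  have less: "\<forall>x\<in>set z. x < Suc k"
    using z(1) unfolding perms_def by simp
  obtain c z' where c: "z = c # z'"
    using perms_length[OF z(1)] assms by (cases z) auto
  have "Suc k # z \<in> perms (Suc k)" "c # Suc k # z' \<in> perms (Suc k)"
    using perms_insert_max[of "[]" z k] perms_insert_max[of "[c]" z' k] z(1) c by simp_all
  moreover have "max_in_front (Suc k # z)" "max_in_front (c # Suc k # z')"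
    using z(2) less c by (simp_all add: max_in_front.first max_in_front.second)
  ultimately show "y \<in> max_in_front_perms (Suc k)"
    using y c unfolding max_in_front_perms_def by auto
qed

lemma max_in_front_perms_Suc:
  "k \<ge> 1 \<Longrightarrow> max_in_front_perms (Suc k)
    = (\<lambda>z. Suc k # z) ` max_in_front_perms k \<union> (\<lambda>z. hd z # Suc k # tl z) ` max_in_front_perms k"
  using max_in_front_perms_Suc_subset max_in_front_perms_Suc_superset by (rule equalityI)

lemma card_max_in_front_perms: "k \<ge> 1 \<Longrightarrow> card (max_in_front_perms k) = 2 ^ (k - 1)"
proof (induction k rule: nat_induct_at_least)
  case base
  then show ?case
    unfolding max_in_front_perms_1 by simp
next
  case (Suc k)
  let ?D = "max_in_front_perms k"
  have nonempty: "z \<noteq> []" "hd z \<le> k" if "z \<in> ?D" for z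
  proof -
    have "length z = k" "set z = {1..k}"
      using that perms_length unfolding max_in_front_perms_def perms_def by auto
    then show "z \<noteq> []"
      using Suc.hyps by auto
    then show "hd z \<le> k"
      using \<open>set z = {1..k}\<close> hd_in_set by fastforce
  qed
  have inj: "inj_on (\<lambda>z. hd z # Suc k # tl z) ?D"
    by (rule inj_onI) (metis list.collapse list.inject nonempty(1))
  have disjoint: "(\<lambda>z. Suc k # z) ` ?D \<inter> (\<lambda>z. hd z # Suc k # tl z) ` ?D = {}"
    using nonempty(2) by fastforce
  have "card (max_in_front_perms (Suc k)) = card ((\<lambda>z. Suc k # z) ` ?D) + card ((\<lambda>z. hd z # Suc k # tl z) ` ?D)"
    using max_in_front_perms_Suc[OF Suc.hyps] disjoint finite_max_in_front_perms
    by (simp add: card_Un_disjoint)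
  also have "\<dots> = 2 * card ?D"
    using card_image[OF inj] by (simp add: card_image)
  also have "\<dots> = 2 ^ (Suc k - 1)"
    using Suc by (simp add: power_eq_if)
  finally show ?case .
qed

lemma card_Sort_family:
  assumes "n \<ge> 4"
  shows "card (Sort_family n) = 7 * 2 ^ (n - 4)"
proof -
  obtain m where n: "n = m + 4"
    using assms le_Suc_ex by (metis add.commute)
  let ?A = "(\<lambda>z. n # z) ` max_in_front_perms (n - 1)"
  let ?B = "(\<lambda>z. (n - 1) # n # z) ` max_in_front_perms (n - 2)"
  let ?C = "(\<lambda>z. (n - 1) # (n - 2) # n # z) ` max_in_front_perms (n - 3)"
  have "card ?A = 2 ^ (m + 2)" "card ?B = 2 ^ (m + 1)" "card ?C = 2 ^ m"
    using card_max_in_front_perms[of "n - 1"] card_max_in_front_perms[of "n - 2"]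
      card_max_in_front_perms[of "n - 3"]
    by (simp_all add: card_image inj_on_def n)
  moreover have "?A \<inter> ?B = {}" "(?A \<union> ?B) \<inter> ?C = {}"
    using assms by auto
  ultimately have "card (Sort_family n) = 2 ^ (m + 2) + 2 ^ (m + 1) + 2 ^ m"
    unfolding Sort_family_def using finite_max_in_front_perms by (simp add: card_Un_disjoint)
  then show ?thesis
    unfolding n by simp
qed

lemma Sort_eq_Sort_family:
  assumes "n \<ge> 4"
  shows "Sort n [1,2,3] [3,2,1] = Sort_family n"
proof
  show "Sort_family n \<subseteq> Sort n [1,2,3] [3,2,1]"
    by (rule Sort_family_subset[OF assms])
  show "Sort n [1,2,3] [3,2,1] \<subseteq> Sort_family n"
  proof
    fix x
    assume "x \<in> Sort n [1,2,3] [3,2,1]"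
    then have "x \<in> perms n" "west_s (sT {[1,2,3],[3,2,1]} x) = [1..<n+1]"
      unfolding Sort_def by auto
    moreover have "sorted_wrt (<) [1..<n+1]"
      by (rule sorted_wrt_upt)
    ultimately show "x \<in> Sort_family n"
      using Sort_imp_family[OF assms] west_s_sorted_imp_avoids_231 by metis
  qed
qed

theorem theorem1p2:
  fixes n :: nat
  assumes "n \<ge> 4"
  shows "card (Sort n [1,2,3] [3,2,1]) = 7 * 2 ^ (n - 4)"
  using Sort_eq_Sort_family[OF assms] card_Sort_family[OF assms] by simp

end
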